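(* Let $(N,g,J)$ be a strict nearly Kähler manifold with canonical connection curvature $\bar R$, regarded as the section $\bar R=\tfrac12\sum_{i,j}e_i\wedge e_j\otimes\bar R_{e_i,e_j}$ of $\Lambda^2\mathrm{T}\otimes\Lambda^2\mathrm{T}$ (a 2-form with values in $\Lambda^2\mathrm T$). Let $\pi_{\mathrm{Sym}^2}$ denote the orthogonal projection from $\Lambda^2\mathrm T\otimes\Lambda^2\mathrm T$ onto $\mathrm{Sym}^2(\Lambda^2\mathrm T)$. Then $$\pi_{\mathrm{Sym}^2}\Big(\sum_{i,j}e_j\wedge e_i\lrcorner\,\bar R_{e_i,e_j}\bar R\Big)=\tfrac12\,q(\bar R)\bar R,$$ where $\bar R_{e_i,e_j}\bar R$ denotes the natural (derivation) action of the skew endomorphism $\bar R_{e_i,e_j}$ on the tensor $\bar R$, and the interior product $e_i\lrcorner$ and exterior product $e_j\wedge$ on the left-hand side are applied only to the first factor of $\Lambda^2\mathrm T\otimes\Lambda^2\mathrm T$.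
   Context: Nearly Kähler manifold: a Riemannian manifold $(N,g)$ with $g$-orthogonal almost complex structure $J$ with $(\nabla^g_XJ)X=0$ for all $X$; strict if $\nabla^g_XJ\ne0$ for all $X\neq0$. Canonical connection: $\bar\nabla=\nabla^g+\tau$, $\tau_X=-\tfrac12J\circ(\nabla^g_XJ)$, with curvature $\bar R_{X,Y}=[\bar\nabla_X,\bar\nabla_Y]-\bar\nabla_{[X,Y]}$; $\bar R$ is pair symmetric. Write $\mathrm T=\mathrm TN$, $\{e_i\}$ a local orthonormal frame, 2-forms identified with skew endomorphisms via $g$; for $A\in\Lambda^2\mathrm T\cong\mathfrak{so}(\mathrm T)$, $A_*$ denotes its natural derivation action on tensors. The curvature endomorphism $q(\bar R)$ of a tensor bundle is $q(\bar R)K:=\tfrac12\sum_{i,j}(e_i\wedge e_j)_*\,\bar R_{e_i,e_j}K$, equivalently $q(\bar R)K=\sum_\alpha(\omega_\alpha)_*\bar R(\omega_\alpha)_*K$ for an orthonormal basis $(\omega_\alpha)$ of $\Lambda^2\mathrm T$. *)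

theory Defs
  imports Complex_Main
begin

text \<open>The tangent space at a point is modelled by
  real coordinates with respect to an orthonormal frame indexed by the finite type 'n,
  so g is the standard inner product.  A tensor in T^{\<otimes>4} (vectors and covectors
  identified via g) is given by its components; \<Lambda>^2T \<otimes> \<Lambda>^2T sits inside it,
  with e_a \<and> e_b = e_a \<otimes> e_b - e_b \<otimes> e_a.\<close>

type_synonym 'n tensor4 = "'n \<Rightarrow> 'n \<Rightarrow> 'n \<Rightarrow> 'n \<Rightarrow> real"

text \<open>An endomorphism A of T is given by its matrix M with M a x = g(A e_x, e_a).\<close>
type_synonym 'n endo = "'n \<Rightarrow> 'n \<Rightarrow> real"

definition kd :: "'n \<Rightarrow> 'n \<Rightarrow> real" where
  "kd x y = (if x = y then 1 else 0)"

definition der4 :: "('n::finite) endo \<Rightarrow> 'n tensor4 \<Rightarrow> 'n tensor4" where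
  "der4 M K = (\<lambda>a b c d. (\<Sum>x\<in>UNIV.
      M a x * K x b c d + M b x * K a x c d + M c x * K a b x d + M d x * K a b c x))"

text \<open>The skew endomorphism e_i \<and> e_j : X \<mapsto> g(e_i,X) e_j - g(e_j,X) e_i.\<close>
definition wedge_endo :: "'n \<Rightarrow> 'n \<Rightarrow> 'n endo" where
  "wedge_endo i j = (\<lambda>d c. kd i c * kd j d - kd j c * kd i d)"

text \<open>Components of the canonical curvature: R a b c d = g(Rbar_{e_a,e_b} e_c, e_d).
  Then the section Rbar = 1/2 \<Sum> e_i \<and> e_j \<otimes> Rbar_{e_i,e_j} of \<Lambda>^2 \<otimes> \<Lambda>^2 has exactly
  the 4-tensor components R.\<close>
definition curv_endo :: "'n tensor4 \<Rightarrow> 'n \<Rightarrow> 'n \<Rightarrow> 'n endo" where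
  "curv_endo R i j = (\<lambda>d c. R i j c d)"

definition q_curv :: "('n::finite) tensor4 \<Rightarrow> 'n tensor4 \<Rightarrow> 'n tensor4" where
  "q_curv R K = (\<lambda>a b c d. (1/2) * (\<Sum>i\<in>UNIV. \<Sum>j\<in>UNIV.
      der4 (wedge_endo i j) (der4 (curv_endo R i j) K) a b c d))"

definition wedge_int_first :: "'n \<Rightarrow> 'n \<Rightarrow> 'n tensor4 \<Rightarrow> 'n tensor4" where
  "wedge_int_first j i K = (\<lambda>a b c d. kd j a * K i b c d - K i a c d * kd j b)"

definition proj_sym2 :: "'n tensor4 \<Rightarrow> 'n tensor4" where
  "proj_sym2 K = (\<lambda>a b c d. (K a b c d + K c d a b) / 2)"

end

theory Submission
  imports Defs
begin

text \<open>Put F(a,b,c,d) = \<Sum>_i (R_{e_i,e_a} K)(e_i,e_b,e_c,e_d).  The contraction on the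
  left-hand side is the antisymmetrisation of F in its first two slots.  Expanding
  (e_i \<and> e_j)_* in q(R)K gives eight contractions; skew symmetry of R_{e_i,e_j} in (i,j)
  identifies them in pairs, cancelling the factor 1/2, and the skew and pair symmetries of K
  turn the result into F(a,b,c,d) - F(b,a,c,d) + F(c,d,a,b) - F(d,c,a,b), which is twice
  the Sym^2-projection of the left-hand side.  For K = R only the skew symmetry in the first
  pair and pair symmetry are needed; skew symmetry in the second pair follows from them.\<close>

lemma sum_kd_mult [simp]: "(\<Sum>x\<in>(UNIV::'n::finite set). kd i x * f x) = (f i :: real)"
proof -
  have "(\<Sum>x\<in>UNIV. kd i x * f x) = (\<Sum>x\<in>UNIV. if i = x then f x else 0)"
    by (rule sum.cong) (auto simp: kd_def)
  then show ?thesis by simp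
qed

lemma kd_commute: "kd x y = kd y x"
  by (simp add: kd_def)

lemma sum_kd_mult' [simp]: "(\<Sum>x\<in>(UNIV::'n::finite set). kd x i * f x) = (f i :: real)"
  by (simp add: kd_commute[of _ i])

lemma sum_mult_kd [simp]: "(\<Sum>x\<in>(UNIV::'n::finite set). f x * kd x i) = (f i :: real)"
  using sum_kd_mult'[of i f] by (simp add: mult.commute)

lemma sum_sum_kd_mult [simp]:
  "(\<Sum>i\<in>(UNIV::'n::finite set). \<Sum>j\<in>(UNIV::'m::finite set). kd i a * G i j) = (\<Sum>j\<in>UNIV. G a j :: real)"
  by (subst sum.swap) simp

lemma der4_wedge_endo:
  "der4 (wedge_endo i j) K a b c d =
     kd j a * K i b c d - kd i a * K j b c d + kd j b * K a i c d - kd i b * K a j c d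
   + kd j c * K a b i d - kd i c * K a b j d + kd j d * K a b c i - kd i d * K a b c j"
  by (simp add: der4_def wedge_endo_def left_diff_distrib mult.assoc sum.distrib sum_subtractf)

definition curv_contract :: "('n::finite) tensor4 \<Rightarrow> 'n tensor4 \<Rightarrow> 'n tensor4" where
  "curv_contract R K a b c d = (\<Sum>i\<in>UNIV. der4 (curv_endo R i a) K i b c d)"

lemma sum_neg_cong: "(\<And>t. f t = - g t) \<Longrightarrow> sum f A = - sum g A" for f g :: "'a \<Rightarrow> 'b::ab_group_add"
  by (simp add: sum_negf[symmetric])

lemma der4_curv_endo_swap:
  assumes "\<And>a b c d. R b a c d = - R a b c d"
  shows "der4 (curv_endo R j i) K = (\<lambda>x y z w. - der4 (curv_endo R i j) K x y z w)"
  unfolding der4_def curv_endo_def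
  by (intro ext sum_neg_cong) (simp add: assms[of j i])

lemma der4_skew12:
  assumes "\<And>a b c d. K b a c d = - K a b c d"
  shows "der4 M K y x z w = - der4 M K x y z w"
  unfolding der4_def
  by (rule sum_neg_cong) (simp add: assms[of _ x] assms[of y _] algebra_simps)

lemma der4_pair_sym:
  assumes "\<And>a b c d. K c d a b = K a b c d"
  shows "der4 M K z w x y = der4 M K x y z w"
  unfolding der4_def
  by (rule sum.cong) (simp_all add: assms[of x y _ w] assms[of x y z _] assms[of _ y z w]
      assms[of x _ z w] algebra_simps)

lemma sum_wedge_int_first_der4:
  "(\<Sum>i\<in>UNIV. \<Sum>j\<in>UNIV. wedge_int_first j i (der4 (curv_endo R i j) K) a b c d)
     = curv_contract R K a b c d - curv_contract R K b a c d"
  by (simp add: wedge_int_first_def curv_contract_def sum_subtractf)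

lemma q_curv_eq_curv_contract:
  assumes R_skew12: "\<And>a b c d. R b a c d = - R a b c d"
    and K_skew12: "\<And>a b c d. K b a c d = - K a b c d"
    and K_pair_sym: "\<And>a b c d. K c d a b = K a b c d"
  shows "q_curv R K a b c d = curv_contract R K a b c d - curv_contract R K b a c d
                             + curv_contract R K c d a b - curv_contract R K d c a b"
proof -
  note swap = der4_curv_endo_swap[OF R_skew12]
    and skew = der4_skew12[OF K_skew12]
    and pair = der4_pair_sym[OF K_pair_sym, where z=a and w=b]
  define F where "F = curv_contract R K"
  have "(\<Sum>j\<in>UNIV. der4 (curv_endo R a j) K j b c d) = - F a b c d"
    by (simp add: F_def curv_contract_def swap[where j=a] sum_negf)
  moreover have "(\<Sum>i\<in>UNIV. der4 (curv_endo R i b) K a i c d) = - F b a c d"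
    by (simp add: F_def curv_contract_def skew[where y=a] sum_negf)
  moreover have "(\<Sum>j\<in>UNIV. der4 (curv_endo R b j) K a j c d) = F b a c d"
    by (simp add: F_def curv_contract_def skew[where y=a] swap[where j=b] sum_negf)
  moreover have "(\<Sum>i\<in>UNIV. der4 (curv_endo R i c) K a b i d) = F c d a b"
    by (simp add: F_def curv_contract_def pair)
  moreover have "(\<Sum>j\<in>UNIV. der4 (curv_endo R c j) K a b j d) = - F c d a b"
    by (simp add: F_def curv_contract_def pair swap[where j=c] sum_negf)
  moreover have "(\<Sum>i\<in>UNIV. der4 (curv_endo R i d) K a b c i) = - F d c a b"
    by (simp add: F_def curv_contract_def pair skew[where y=c] sum_negf)
  moreover have "(\<Sum>j\<in>UNIV. der4 (curv_endo R d j) K a b c j) = F d c a b"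
    by (simp add: F_def curv_contract_def pair skew[where y=c] swap[where j=d] sum_negf)
  ultimately show ?thesis
    unfolding q_curv_def der4_wedge_endo
    by (simp add: sum.distrib sum_subtractf F_def curv_contract_def)
qed

theorem lemma2p2:
  fixes R :: "('n::finite) tensor4"
  assumes skew12: "\<And>a b c d. R b a c d = - R a b c d"
    and skew34: "\<And>a b c d. R a b d c = - R a b c d"
    and pair_sym: "\<And>a b c d. R c d a b = R a b c d"
  shows "proj_sym2 (\<lambda>a b c d. \<Sum>i\<in>UNIV. \<Sum>j\<in>UNIV.
            wedge_int_first j i (der4 (curv_endo R i j) R) a b c d)
         = (\<lambda>a b c d. (1/2) * q_curv R R a b c d)"
  unfolding proj_sym2_def sum_wedge_int_first_der4
    q_curv_eq_curv_contract[OF skew12 skew12 pair_sym]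
  by (intro ext) simp

end
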